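(* Under the setup described in the context, for every $k\in\mathbb{Z}_+$, $$p_k:=\upsilon^\rho_\xi\big(I^k_0\text{ is bad}\big)\le L_k^{-\alpha}.$$
   Context: Let $\xi$ be an aperiodic positive integer-valued random variable with $\mathbb{E}(\xi^{1+\varepsilon})<\infty$ for some $\varepsilon>0$. Let $\rho$ be the stationary delay: $\mathbb{P}(\rho=k)=\frac{1}{\mathbb{E}(\xi)}\sum_{i\ge k+1}\mathbb{P}(\xi=i)$, $k\in\mathbb{Z}_+$, independent of i.i.d. copies $\xi_1,\xi_2,\dots$ of $\xi$. Under $\upsilon^\rho_\xi$, the environment is the random set $\Lambda=\{X_0,X_1,\dots\}\subseteq\mathbb{Z}_+$ where $X_0=\rho$, $X_i=X_{i-1}+\xi_i$. Let $c_1=c_1(\xi,\varepsilon)\in(0,\infty)$ be a constant such that, writing $Y_n=\mathbf 1_{\{n\in\Lambda\}}$, for all $n,m\in\mathbb{Z}_+$ and all events $A\in\sigma(Y_i;0\le i\le m)$, $B\in\sigma(Y_i;i\ge m+n)$ one has $\upsilon^\rho_\xi(A\cap B)\le\upsilon^\rho_\xi(A)\upsilon^\rho_\xi(B)+c_1n^{-\varepsilon}$ (such a constant exists). Fix $\alpha\in(0,\varepsilon/2]$ and $\gamma\in(1,1+\frac{\alpha}{\alpha+2})$, and let $L_0\in\mathbb{Z}_+$ satisfy: (i) $L_0^{\gamma-1}\ge3$; (ii) $L_0^{\varepsilon-\alpha}\ge\mathbb{E}(\rho^\varepsilon)$; (iii) $L_0^{c_2}\ge c_1+1$ where $c_2=2+2\alpha-\gamma\alpha-2\gamma>0$.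 Define $L_k=L_{k-1}\lfloor L_{k-1}^{\gamma-1}\rfloor$ for $k\ge1$. For $j,k\in\mathbb{Z}_+$ let the block $I^k_j=[jL_k,(j+1)L_k)\cap\mathbb{Z}_+$ and $l_{k,j}=\{j\lfloor L_{k-1}^{\gamma-1}\rfloor,\dots,(j+1)\lfloor L_{k-1}^{\gamma-1}\rfloor-1\}$ (so $I^k_j=\bigcup_{i\in l_{k,j}}I^{k-1}_i$). For an environment $\Lambda\subseteq\mathbb{Z}_+$: $I^0_j$ is bad if $\Lambda\cap I^0_j=\varnothing$; for $k\ge1$, $I^k_j$ is bad if there exist $i_1,i_2\in l_{k,j}$ with $|i_1-i_2|\ge2$ such that $I^{k-1}_{i_1}$ and $I^{k-1}_{i_2}$ are both bad. A block is good if it is not bad. *)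

theory Defs
  imports "HOL-Probability.Probability"
begin

text \<open>Random environment: \<rho> is the delay, f j = \<xi>_(j+1) are i.i.d. copies of \<xi>.
  X_i = \<rho> + \<xi>_1 + ... + \<xi>_i, and Y n = (n \<in> \<Lambda>).\<close>

definition env_indicator :: "nat \<times> (nat \<Rightarrow> nat) \<Rightarrow> nat \<Rightarrow> bool" where
  "env_indicator \<omega> n = (\<exists>i. fst \<omega> + (\<Sum>j<i. snd \<omega> j) = n)"

definition env_law :: "nat pmf \<Rightarrow> nat pmf \<Rightarrow> (nat \<Rightarrow> bool) measure" where
  "env_law xi rho =
     distr (pair_measure (measure_pmf rho) (PiM UNIV (\<lambda>_::nat. measure_pmf xi)))
           (PiM UNIV (\<lambda>_::nat. count_space UNIV)) env_indicator"

definition coord_sigma :: "nat set \<Rightarrow> (nat \<Rightarrow> bool) set set" where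
  "coord_sigma S = sigma_sets UNIV {{y. y i \<in> X} | i X. i \<in> S}"

definition mfac :: "real \<Rightarrow> nat \<Rightarrow> nat" where
  "mfac \<gamma> L = nat \<lfloor>real L powr (\<gamma> - 1)\<rfloor>"

fun scale :: "nat \<Rightarrow> real \<Rightarrow> nat \<Rightarrow> nat" where
  "scale L0 \<gamma> 0 = L0"
| "scale L0 \<gamma> (Suc k) = scale L0 \<gamma> k * mfac \<gamma> (scale L0 \<gamma> k)"

definition block :: "nat \<Rightarrow> real \<Rightarrow> nat \<Rightarrow> nat \<Rightarrow> nat set" where
  "block L0 \<gamma> k j = {j * scale L0 \<gamma> k ..< (j+1) * scale L0 \<gamma> k}"

text \<open>l_{k,j} for k \<ge> 1, written with k = Suc k'.\<close>
definition subidx :: "nat \<Rightarrow> real \<Rightarrow> nat \<Rightarrow> nat \<Rightarrow> nat set" where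
  "subidx L0 \<gamma> k' j = {j * mfac \<gamma> (scale L0 \<gamma> k') ..< (j+1) * mfac \<gamma> (scale L0 \<gamma> k')}"

fun bad :: "nat \<Rightarrow> real \<Rightarrow> nat set \<Rightarrow> nat \<Rightarrow> nat \<Rightarrow> bool" where
  "bad L0 \<gamma> \<Lambda> 0 j = (\<Lambda> \<inter> block L0 \<gamma> 0 j = {})"
| "bad L0 \<gamma> \<Lambda> (Suc k) j =
     (\<exists>i1\<in>subidx L0 \<gamma> k j. \<exists>i2\<in>subidx L0 \<gamma> k j.
        2 \<le> \<bar>int i1 - int i2\<bar> \<and> bad L0 \<gamma> \<Lambda> k i1 \<and> bad L0 \<gamma> \<Lambda> k i2)"

end

theory Submission
  imports Defs
begin

text \<open>The block I^0_0 is bad exactly when \<rho> \<ge> L_0, so p_0 \<le> E \<rho>^\<epsilon> / L_0^\<epsilon> by Markov's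
  inequality; E \<rho>^\<epsilon> is finite because, \<rho> being the stationary delay, it is controlled by
  E \<xi>^(1+\<epsilon>). Stationarity of \<rho> also makes the indicator process of \<Lambda> shift invariant, so all
  blocks of level k are bad with the same probability p_k. A bad block of level k+1 contains
  two bad blocks of level k that are separated by a whole block, i.e. by a gap of length at
  least L_k; the mixing bound gives each such pair probability at most p_k^2 + c_1 L_k^(-\<epsilon>),
  and summing over at most m^2 pairs, m = \<lfloor>L_k^(\<gamma>-1)\<rfloor>, the choice of \<gamma> and condition (iii)
  yield p_(k+1) \<le> L_(k+1)^(-\<alpha>).\<close>

abbreviation bool_seqs :: "(nat \<Rightarrow> bool) measure" where
  "bool_seqs \<equiv> PiM UNIV (\<lambda>_::nat. count_space UNIV)"

abbreviation iid_space :: "nat pmf \<Rightarrow> (nat \<Rightarrow> nat) measure" where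
  "iid_space xi \<equiv> PiM UNIV (\<lambda>_::nat. measure_pmf xi)"

abbreviation delay_space :: "nat pmf \<Rightarrow> nat pmf \<Rightarrow> (nat \<times> (nat \<Rightarrow> nat)) measure" where
  "delay_space rho xi \<equiv> measure_pmf rho \<Otimes>\<^sub>M iid_space xi"

lemma block_subset_Suc:
  assumes "i \<in> subidx L0 \<gamma> k j"
  shows "block L0 \<gamma> k i \<subseteq> block L0 \<gamma> (Suc k) j"
proof -
  let ?L = "scale L0 \<gamma> k" and ?m = "mfac \<gamma> (scale L0 \<gamma> k)"
  from assms have "j * ?m \<le> i" "i + 1 \<le> (j + 1) * ?m"
    by (auto simp: subidx_def)
  then have "j * ?m * ?L \<le> i * ?L" "(i + 1) * ?L \<le> (j + 1) * ?m * ?L"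
    by (intro mult_right_mono; simp)+
  then show ?thesis
    by (auto simp: block_def algebra_simps)
qed

lemma bad_index_shift:
  "bad L0 \<gamma> \<Lambda> k (i + j) = bad L0 \<gamma> {n. n + j * scale L0 \<gamma> k \<in> \<Lambda>} k i"
proof (induction k arbitrary: i j)
  case 0
  have "block L0 \<gamma> 0 (i + j) = (\<lambda>x. x + j * L0) ` block L0 \<gamma> 0 i"
    by (simp add: block_def image_add_atLeastLessThan' algebra_simps)
  then show ?case by auto
next
  case (Suc k)
  define m where "m = mfac \<gamma> (scale L0 \<gamma> k)"
  have "subidx L0 \<gamma> k (i + j) = (\<lambda>x. x + j * m) ` subidx L0 \<gamma> k i"
    by (simp add: subidx_def m_def image_add_atLeastLessThan' algebra_simps)
  moreover have "bad L0 \<gamma> \<Lambda> k (x + j * m) = bad L0 \<gamma> {n. n + j * scale L0 \<gamma> (Suc k) \<in> \<Lambda>} k x" for x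
    using Suc.IH[of x "j * m"] by (simp add: m_def ac_simps)
  ultimately show ?case
    by (simp del: scale.simps)
qed

lemma coord_sigma_mono: "S \<subseteq> T \<Longrightarrow> coord_sigma S \<subseteq> coord_sigma T"
  unfolding coord_sigma_def by (rule sigma_sets_subseteq) blast

lemma coord_sigma_generator: "i \<in> S \<Longrightarrow> {y. y i \<in> X} \<in> coord_sigma S"
  unfolding coord_sigma_def by (rule sigma_sets.Basic) blast

lemma coord_sigma_subset_sets: "coord_sigma S \<subseteq> sets bool_seqs"
proof -
  have "{y. y i \<in> X} \<in> sets bool_seqs" for i and X :: "bool set"
    using measurable_sets[OF measurable_component_singleton[of i UNIV], of X "\<lambda>_. count_space UNIV"]
    by (simp add: space_PiM vimage_def)
  then have "{{y. y i \<in> X} | i X. i \<in> S} \<subseteq> sets bool_seqs"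
    by blast
  from sets.sigma_sets_subset[OF this] show ?thesis
    unfolding coord_sigma_def by (simp add: space_PiM)
qed

lemma bad_in_coord_sigma: "{y. bad L0 \<gamma> {n. y n} k j} \<in> coord_sigma (block L0 \<gamma> k j)"
proof (induction k arbitrary: j)
  case 0
  interpret sigma_algebra UNIV "coord_sigma (block L0 \<gamma> 0 j)"
    unfolding coord_sigma_def by (rule sigma_algebra_sigma_sets) auto
  have "{y. bad L0 \<gamma> {n. y n} 0 j} = UNIV - (\<Union>n\<in>block L0 \<gamma> 0 j. {y. y n \<in> {True}})"
    by auto
  also have "\<dots> \<in> coord_sigma (block L0 \<gamma> 0 j)"
    by (intro Diff top finite_UN coord_sigma_generator) (auto simp: block_def)
  finally show ?case .
next
  case (Suc k)
  interpret sigma_algebra UNIV "coord_sigma (block L0 \<gamma> (Suc k) j)"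
    unfolding coord_sigma_def by (rule sigma_algebra_sigma_sets) auto
  let ?S = "subidx L0 \<gamma> k j" and ?B = "\<lambda>i. {y. bad L0 \<gamma> {n. y n} k i}"
  have sub_events: "?B i \<in> coord_sigma (block L0 \<gamma> (Suc k) j)" if "i \<in> ?S" for i
    using Suc.IH coord_sigma_mono[OF block_subset_Suc[OF that]] by blast
  have "{y. bad L0 \<gamma> {n. y n} (Suc k) j}
      = (\<Union>i1\<in>?S. \<Union>i2\<in>?S. if 2 \<le> \<bar>int i1 - int i2\<bar> then ?B i1 \<inter> ?B i2 else {})"
    by (auto split: if_splits)
  also have "\<dots> \<in> coord_sigma (block L0 \<gamma> (Suc k) j)"
    by (intro finite_UN) (auto simp: subidx_def sub_events)
  finally show ?case .
qed

lemma bad_in_sets: "{y. bad L0 \<gamma> {n. y n} k j} \<in> sets bool_seqs"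
  using bad_in_coord_sigma coord_sigma_subset_sets by blast

section \<open>Stationarity of the environment\<close>

lemma measurable_increment [measurable]:
  "(\<lambda>\<omega>. snd \<omega> j) \<in> delay_space rho xi \<rightarrow>\<^sub>M count_space UNIV"
proof -
  have "(\<lambda>f. f j) \<in> iid_space xi \<rightarrow>\<^sub>M count_space UNIV"
    by (subst measurable_cong_sets[OF refl, of _ "measure_pmf xi"])
      (auto intro: measurable_component_singleton)
  then show ?thesis by measurable
qed

lemma measurable_env_indicator: "env_indicator \<in> delay_space rho xi \<rightarrow>\<^sub>M bool_seqs"
proof -
  have "(\<lambda>\<omega>. fst \<omega> + (\<Sum>j<i. snd \<omega> j)) \<in> delay_space rho xi \<rightarrow>\<^sub>M count_space UNIV" for i
    by (induction i) (simp_all add: add.assoc[symmetric], measurable)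
  then show ?thesis
    unfolding env_indicator_def[abs_def]
    by (intro measurable_PiM_single' pred_intros_countable pred_count_space_const1) auto
qed

lemma measurable_shift: "(\<lambda>y n. y (n + j)) \<in> bool_seqs \<rightarrow>\<^sub>M bool_seqs"
  by (rule measurable_PiM_single') (auto intro: measurable_component_singleton)

lemma prob_space_env_law: "prob_space (env_law xi rho)"
  unfolding env_law_def
  by (intro prob_space.prob_space_distr measurable_env_indicator prob_space_pair
      prob_space_measure_pmf prob_space_PiM)

lemma sets_env_law: "sets (env_law xi rho) = sets bool_seqs"
  by (simp add: env_law_def)

lemma measure_env_law:
  "B \<in> sets bool_seqs \<Longrightarrow> measure (env_law xi rho) B = measure (delay_space rho xi) {\<omega>. env_indicator \<omega> \<in> B}"
  unfolding env_law_def by (simp add: measure_distr[OF measurable_env_indicator] vimage_def space_pair_measure space_PiM)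

lemma emeasure_delay_space:
  assumes "A \<in> sets (delay_space rho xi)"
  shows "emeasure (delay_space rho xi) A
           = (\<Sum>r. ennreal (pmf rho r) * emeasure (iid_space xi) (Pair r -` A))"
proof -
  interpret prob_space "iid_space xi"
    by (intro prob_space_PiM prob_space_measure_pmf)
  show ?thesis
    using emeasure_pair_measure_alt[OF assms]
    by (simp add: nn_integral_measure_pmf nn_integral_count_space_nat)
qed

lemma emeasure_iid_space_case_nat:
  assumes A: "A \<in> sets (iid_space xi)"
  shows "emeasure (iid_space xi) A
           = (\<Sum>s. ennreal (pmf xi s) * emeasure (iid_space xi) {f. case_nat s f \<in> A})"
proof -
  interpret sequence_space "measure_pmf xi"
    by (simp add: sequence_space_def product_prob_space_def product_prob_space_axioms_def
        product_sigma_finite_def prob_space_measure_pmf prob_space_imp_sigma_finite)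
  have cons: "(\<lambda>(s, f). case_nat s f) \<in> delay_space xi xi \<rightarrow>\<^sub>M iid_space xi"
    using measurable_case_nat'[OF measurable_fst measurable_snd] by (simp add: split_beta')
  have "emeasure (iid_space xi) A = emeasure (delay_space xi xi) ((\<lambda>(s, f). case_nat s f) -` A)"
    by (subst PiM_iter[symmetric]) (simp add: emeasure_distr[OF cons A] space_pair_measure space_PiM)
  also have "\<dots> = (\<Sum>s. ennreal (pmf xi s) * emeasure (iid_space xi) {f. case_nat s f \<in> A})"
    using measurable_sets[OF cons A]
    by (subst emeasure_delay_space) (simp_all add: space_pair_measure space_PiM vimage_def)
  finally show ?thesis .
qed

lemma env_indicator_Suc_delay: "env_indicator (Suc r, f) (Suc n) = env_indicator (r, f) n"
  by (simp add: env_indicator_def)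

lemma env_indicator_zero_delay:
  "env_indicator (0, case_nat (Suc s) f) (Suc n) = env_indicator (s, f) n"
proof
  assume "env_indicator (0, case_nat (Suc s) f) (Suc n)"
  then obtain i where i: "(\<Sum>j<i. case_nat (Suc s) f j) = Suc n"
    by (auto simp: env_indicator_def)
  then obtain i' where "i = Suc i'"
    by (cases i) auto
  with i have "s + (\<Sum>j<i'. f j) = n"
    by (simp add: sum.lessThan_Suc_shift del: sum.lessThan_Suc)
  then show "env_indicator (s, f) n"
    by (auto simp: env_indicator_def)
next
  assume "env_indicator (s, f) n"
  then obtain i where "s + (\<Sum>j<i. f j) = n"
    by (auto simp: env_indicator_def)
  then have "(\<Sum>j<Suc i. case_nat (Suc s) f j) = Suc n"
    by (simp add: sum.lessThan_Suc_shift del: sum.lessThan_Suc)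
  then show "env_indicator (0, case_nat (Suc s) f) (Suc n)"
    unfolding env_indicator_def fst_conv snd_conv add_0 by blast
qed

lemma suminf_ennreal_split_head: "(\<Sum>n. f n :: ennreal) = f 0 + (\<Sum>n. f (Suc n))"
  using suminf_offset[of f 1] by (simp add: summableI)

lemma pmf_stationary_delay_Suc:
  assumes xi_pos: "set_pmf xi \<subseteq> {1..}"
    and rho_def: "\<And>k. pmf rho k = measure_pmf.prob xi {k+1..} / measure_pmf.expectation xi real"
  shows "pmf rho (Suc r) + pmf rho 0 * pmf xi (Suc r) = pmf rho r"
proof -
  have "measure_pmf.prob xi {Suc r} + measure_pmf.prob xi {Suc (Suc r)..}
      = measure_pmf.prob xi ({Suc r} \<union> {Suc (Suc r)..})"
    by (rule measure_pmf.finite_measure_Union[symmetric]) auto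
  also have "{Suc r} \<union> {Suc (Suc r)..} = {Suc r..}"
    by auto
  finally have "measure_pmf.prob xi {Suc r..} = pmf xi (Suc r) + measure_pmf.prob xi {Suc (Suc r)..}"
    by (simp add: measure_pmf_single)
  moreover have "measure_pmf.prob xi {1..} = 1"
    using xi_pos by (simp add: measure_pmf.prob_eq_1 AE_measure_pmf_iff subset_eq)
  ultimately show ?thesis
    by (simp add: rho_def add_divide_distrib)
qed

text \<open>Conditionally on the delay, shifting by one step turns delay r+1 into r and delay 0
  into \<xi>_1 - 1; by pmf_stationary_delay_Suc the resulting mixture of delays is again \<rho>.\<close>

lemma emeasure_env_shift_Suc:
  assumes xi_pos: "set_pmf xi \<subseteq> {1..}"
    and rho_def: "\<And>k. pmf rho k = measure_pmf.prob xi {k+1..} / measure_pmf.expectation xi real"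
    and Q: "Q \<in> sets bool_seqs"
  shows "emeasure (delay_space rho xi) {\<omega>. (\<lambda>n. env_indicator \<omega> (Suc n)) \<in> Q}
           = emeasure (delay_space rho xi) {\<omega>. env_indicator \<omega> \<in> Q}"
proof -
  define F where "F r = emeasure (iid_space xi) {f. env_indicator (r, f) \<in> Q}" for r
  have shifted: "(\<lambda>\<omega> n. env_indicator \<omega> (Suc n)) \<in> delay_space r xi \<rightarrow>\<^sub>M bool_seqs" for r
    using measurable_comp[OF measurable_env_indicator measurable_shift[of 1]] by (simp add: o_def)
  have "pmf xi 0 = 0"
    using xi_pos by (auto simp: pmf_eq_0_set_pmf)
  then have delay0: "emeasure (iid_space xi) {f. (\<lambda>n. env_indicator (0, f) (Suc n)) \<in> Q}
      = (\<Sum>s. ennreal (pmf xi (Suc s)) * F s)"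
    using measurable_sets[OF shifted Q, THEN sets_Pair1, of 0 rho]
    by (subst emeasure_iid_space_case_nat, simp add: vimage_def space_pair_measure space_PiM)
      (subst suminf_ennreal_split_head, simp add: env_indicator_zero_delay F_def)
  have "emeasure (delay_space rho xi) {\<omega>. (\<lambda>n. env_indicator \<omega> (Suc n)) \<in> Q}
      = ennreal (pmf rho 0) * (\<Sum>s. ennreal (pmf xi (Suc s)) * F s) + (\<Sum>r. ennreal (pmf rho (Suc r)) * F r)"
    using measurable_sets[OF shifted Q]
    by (subst emeasure_delay_space, simp add: vimage_def space_pair_measure space_PiM)
      (subst suminf_ennreal_split_head, simp add: delay0 env_indicator_Suc_delay F_def)
  also have "\<dots> = (\<Sum>r. ennreal (pmf rho 0) * (ennreal (pmf xi (Suc r)) * F r)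
      + ennreal (pmf rho (Suc r)) * F r)"
    by (subst suminf_add[symmetric]) (simp_all add: ennreal_suminf_cmult)
  also have "\<dots> = (\<Sum>r. ennreal (pmf rho r) * F r)"
  proof (rule suminf_cong)
    fix r
    have "ennreal (pmf rho 0) * (ennreal (pmf xi (Suc r)) * F r) + ennreal (pmf rho (Suc r)) * F r
        = ennreal (pmf rho (Suc r) + pmf rho 0 * pmf xi (Suc r)) * F r"
      by (simp add: ennreal_plus ennreal_mult algebra_simps)
    then show "ennreal (pmf rho 0) * (ennreal (pmf xi (Suc r)) * F r) + ennreal (pmf rho (Suc r)) * F r
        = ennreal (pmf rho r) * F r"
      by (simp only: pmf_stationary_delay_Suc[OF xi_pos rho_def])
  qed
  also have "\<dots> = emeasure (delay_space rho xi) {\<omega>. env_indicator \<omega> \<in> Q}"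
    using measurable_sets[OF measurable_env_indicator Q]
    by (subst emeasure_delay_space) (simp_all add: vimage_def space_pair_measure space_PiM F_def)
  finally show ?thesis .
qed

lemma emeasure_env_shift:
  assumes xi_pos: "set_pmf xi \<subseteq> {1..}"
    and rho_def: "\<And>k. pmf rho k = measure_pmf.prob xi {k+1..} / measure_pmf.expectation xi real"
    and Q: "Q \<in> sets bool_seqs"
  shows "emeasure (delay_space rho xi) {\<omega>. (\<lambda>n. env_indicator \<omega> (n + j)) \<in> Q}
           = emeasure (delay_space rho xi) {\<omega>. env_indicator \<omega> \<in> Q}"
  using Q
proof (induction j arbitrary: Q)
  case (Suc j)
  let ?Q' = "{y. (\<lambda>n. y (n + j)) \<in> Q}"
  have "?Q' \<in> sets bool_seqs"
    using measurable_sets[OF measurable_shift Suc.prems] by (simp add: vimage_def space_PiM)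
  then show ?case
    using emeasure_env_shift_Suc[OF xi_pos rho_def, of ?Q'] Suc.IH[OF Suc.prems] by simp
qed simp

lemma measure_env_law_bad_stationary:
  assumes xi_pos: "set_pmf xi \<subseteq> {1..}"
    and rho_def: "\<And>k. pmf rho k = measure_pmf.prob xi {k+1..} / measure_pmf.expectation xi real"
  shows "measure (env_law xi rho) {y. bad L0 \<gamma> {n. y n} k j}
           = measure (env_law xi rho) {y. bad L0 \<gamma> {n. y n} k 0}"
proof -
  have "{\<omega>. env_indicator \<omega> \<in> {y. bad L0 \<gamma> {n. y n} k j}}
      = {\<omega>. (\<lambda>n. env_indicator \<omega> (n + j * scale L0 \<gamma> k)) \<in> {y. bad L0 \<gamma> {n. y n} k 0}}"
    using bad_index_shift[of L0 \<gamma> _ k 0 j] by simp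
  then show ?thesis
    using emeasure_env_shift[OF xi_pos rho_def bad_in_sets[of L0 \<gamma> k 0], where j = "j * scale L0 \<gamma> k"]
    by (simp only: measure_env_law[OF bad_in_sets]) (simp add: measure_def)
qed

section \<open>The first scale\<close>

lemma sum_lessThan_powr_le:
  fixes \<epsilon> :: real
  assumes "\<epsilon> \<ge> 0"
  shows "(\<Sum>k<j. real k powr \<epsilon>) \<le> real j powr (1 + \<epsilon>)"
proof -
  have "(\<Sum>k<j. real k powr \<epsilon>) \<le> (\<Sum>k<j. real j powr \<epsilon>)"
    using assms by (intro sum_mono powr_mono2) auto
  also have "\<dots> = real j powr (1 + \<epsilon>)"
    by (cases "j = 0") (simp_all add: powr_add)
  finally show ?thesis .
qed

text \<open>Summation by parts: E \<rho>^\<epsilon> = E(\<Sum>k<\<xi>. k^\<epsilon>) / E \<xi> \<le> E \<xi>^(1+\<epsilon>) / E \<xi>.\<close>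

lemma integrable_stationary_delay_powr:
  fixes \<epsilon> :: real
  assumes eps_nonneg: "\<epsilon> \<ge> 0"
    and xi_moment: "integrable (measure_pmf xi) (\<lambda>n. real n powr (1 + \<epsilon>))"
    and rho_def: "\<And>k. pmf rho k = measure_pmf.prob xi {k+1..} / measure_pmf.expectation xi real"
  shows "integrable (measure_pmf rho) (\<lambda>k. real k powr \<epsilon>)"
proof -
  define c where "c = 1 / measure_pmf.expectation xi real"
  have "c \<ge> 0"
    unfolding c_def by (simp add: Bochner_Integration.integral_nonneg)
  moreover have "pmf rho k = c * measure_pmf.prob xi {Suc k..}" for k
    by (simp add: rho_def c_def)
  ultimately have pmf_rho: "ennreal (pmf rho k) = ennreal c * emeasure (measure_pmf xi) {Suc k..}" for k
    by (simp add: ennreal_mult measure_pmf.emeasure_eq_measure)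
  have tail_sum: "(\<Sum>k. ennreal (real k powr \<epsilon>) * indicator {Suc k..} j) \<le> ennreal (real j powr (1 + \<epsilon>))"
    for j :: nat
  proof -
    have "(\<Sum>k. ennreal (real k powr \<epsilon>) * indicator {Suc k..} j) = (\<Sum>k<j. ennreal (real k powr \<epsilon>))"
      by (subst suminf_finite[of "{..<j}"]) (auto simp: indicator_def)
    also have "\<dots> \<le> ennreal (real j powr (1 + \<epsilon>))"
      using sum_lessThan_powr_le[OF eps_nonneg] by simp
    finally show ?thesis .
  qed
  have "(\<integral>\<^sup>+k. ennreal (real k powr \<epsilon>) \<partial>measure_pmf rho)
      = (\<Sum>k. ennreal (pmf rho k) * ennreal (real k powr \<epsilon>))"
    by (simp add: nn_integral_measure_pmf nn_integral_count_space_nat)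
  also have "\<dots> = ennreal c * (\<integral>\<^sup>+j. (\<Sum>k. ennreal (real k powr \<epsilon>) * indicator {Suc k..} j) \<partial>measure_pmf xi)"
    by (simp add: pmf_rho nn_integral_suminf nn_integral_cmult_indicator ennreal_suminf_cmult ac_simps)
  also have "\<dots> \<le> ennreal c * (\<integral>\<^sup>+j. ennreal (real j powr (1 + \<epsilon>)) \<partial>measure_pmf xi)"
    by (intro mult_left_mono nn_integral_mono tail_sum) auto
  also have "\<dots> < \<infinity>"
    using integrableD(2)[OF xi_moment] by (simp add: ennreal_mult_less_top less_top)
  finally show ?thesis
    by (intro integrableI_nonneg) auto
qed

lemma bad_level0_env_indicator_iff: "bad L0 \<gamma> {n. env_indicator (r, f) n} 0 0 \<longleftrightarrow> L0 \<le> r"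
proof
  assume "bad L0 \<gamma> {n. env_indicator (r, f) n} 0 0"
  moreover have "env_indicator (r, f) r"
    unfolding env_indicator_def by (intro exI[of _ 0]) simp
  ultimately show "L0 \<le> r"
    by (auto simp: block_def)
next
  assume "L0 \<le> r"
  moreover have "r \<le> n" if "env_indicator (r, f) n" for n
    using that by (auto simp: env_indicator_def)
  ultimately show "bad L0 \<gamma> {n. env_indicator (r, f) n} 0 0"
    by (fastforce simp: block_def)
qed

lemma measure_env_law_bad_level0:
  "measure (env_law xi rho) {y. bad L0 \<gamma> {n. y n} 0 0} = measure_pmf.prob rho {L0..}"
proof -
  interpret prob_space "iid_space xi"
    by (intro prob_space_PiM prob_space_measure_pmf)
  have "{\<omega>. env_indicator \<omega> \<in> {y. bad L0 \<gamma> {n. y n} 0 0}} = {L0..} \<times> UNIV"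
    using bad_level0_env_indicator_iff by (auto simp del: bad.simps)
  moreover have "emeasure (delay_space rho xi) ({L0..} \<times> UNIV) = emeasure (measure_pmf rho) {L0..}"
    using emeasure_pair_measure_Times[of "{L0..}" "measure_pmf rho" UNIV] emeasure_space_1
      sets.top[of "iid_space xi"]
    by (simp add: space_PiM)
  ultimately show ?thesis
    by (simp only: measure_env_law[OF bad_in_sets]) (simp add: measure_def)
qed

lemma prob_atLeast_le_powr:
  fixes p :: "nat pmf" and \<epsilon> :: real
  assumes "\<epsilon> > 0" "L > 0"
    and "integrable (measure_pmf p) (\<lambda>k. real k powr \<epsilon>)"
  shows "measure_pmf.prob p {L..} \<le> measure_pmf.expectation p (\<lambda>k. real k powr \<epsilon>) / real L powr \<epsilon>"
proof -
  have "L \<le> k \<longleftrightarrow> real L powr \<epsilon> \<le> real k powr \<epsilon>" for k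
    using assms(1) powr_mono2[of \<epsilon> "real L" "real k"] powr_less_mono2[of \<epsilon> "real k" "real L"]
    by (metis less_le_not_le nle_le of_nat_0_le_iff of_nat_le_iff)
  then have "{L..} = {k \<in> space (measure_pmf p). real L powr \<epsilon> \<le> real k powr \<epsilon>}"
    by auto
  then show ?thesis
    using integral_Markov_inequality_measure[OF assms(3), of UNIV "real L powr \<epsilon>"] assms(2)
    by simp
qed

lemma measure_env_law_bad_level0_le:
  fixes \<epsilon> \<alpha> :: real
  assumes eps_pos: "\<epsilon> > 0" and "L0 > 0"
    and xi_moment: "integrable (measure_pmf xi) (\<lambda>n. real n powr (1 + \<epsilon>))"
    and rho_def: "\<And>k. pmf rho k = measure_pmf.prob xi {k+1..} / measure_pmf.expectation xi real"
    and L0_moment: "real L0 powr (\<epsilon> - \<alpha>) \<ge> measure_pmf.expectation rho (\<lambda>k. real k powr \<epsilon>)"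
  shows "measure (env_law xi rho) {y. bad L0 \<gamma> {n. y n} 0 0} \<le> real L0 powr (-\<alpha>)"
proof -
  have "measure_pmf.prob rho {L0..} \<le> measure_pmf.expectation rho (\<lambda>k. real k powr \<epsilon>) / real L0 powr \<epsilon>"
    using integrable_stationary_delay_powr[OF _ xi_moment rho_def] eps_pos \<open>L0 > 0\<close>
    by (intro prob_atLeast_le_powr) auto
  also have "\<dots> \<le> real L0 powr (\<epsilon> - \<alpha>) / real L0 powr \<epsilon>"
    using L0_moment by (intro divide_right_mono) auto
  also have "\<dots> = real L0 powr (-\<alpha>)"
    using \<open>L0 > 0\<close> by (simp add: powr_diff powr_minus_divide)
  finally show ?thesis
    unfolding measure_env_law_bad_level0 .
qed

section \<open>From one scale to the next\<close>

definition coord_mixing :: "(nat \<Rightarrow> bool) measure \<Rightarrow> real \<Rightarrow> real \<Rightarrow> bool" where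
  "coord_mixing M c \<epsilon> \<longleftrightarrow> (\<forall>n m A B. n \<ge> 1 \<longrightarrow> A \<in> coord_sigma {..m} \<longrightarrow> B \<in> coord_sigma {m+n..} \<longrightarrow>
     measure M (A \<inter> B) \<le> measure M A * measure M B + c * real n powr (-\<epsilon>))"

lemma bad_Suc_subset_pairs:
  "{y. bad L0 \<gamma> {n. y n} (Suc k) 0}
     \<subseteq> (\<Union>q \<in> {(a, b). b < mfac \<gamma> (scale L0 \<gamma> k) \<and> a + 2 \<le> b}.
           {y. bad L0 \<gamma> {n. y n} k (fst q)} \<inter> {y. bad L0 \<gamma> {n. y n} k (snd q)})"
proof
  fix y
  assume "y \<in> {y. bad L0 \<gamma> {n. y n} (Suc k) 0}"
  then obtain a b where ab: "a < mfac \<gamma> (scale L0 \<gamma> k)" "b < mfac \<gamma> (scale L0 \<gamma> k)"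
      "2 \<le> \<bar>int a - int b\<bar>" "bad L0 \<gamma> {n. y n} k a" "bad L0 \<gamma> {n. y n} k b"
    by (auto simp: subidx_def)
  show "y \<in> (\<Union>q \<in> {(a, b). b < mfac \<gamma> (scale L0 \<gamma> k) \<and> a + 2 \<le> b}.
           {y. bad L0 \<gamma> {n. y n} k (fst q)} \<inter> {y. bad L0 \<gamma> {n. y n} k (snd q)})"
  proof (cases "a < b")
    case True
    with ab show ?thesis by (intro UN_I[of "(a, b)"]) auto
  next
    case False
    with ab show ?thesis by (intro UN_I[of "(b, a)"]) auto
  qed
qed

lemma measure_bad_pair_le:
  assumes mixing: "coord_mixing M c \<epsilon>" and "c \<ge> 0" "\<epsilon> > 0"
    and L: "scale L0 \<gamma> k \<ge> 1" and ab: "a + 2 \<le> b"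
  shows "measure M ({y. bad L0 \<gamma> {n. y n} k a} \<inter> {y. bad L0 \<gamma> {n. y n} k b})
           \<le> measure M {y. bad L0 \<gamma> {n. y n} k a} * measure M {y. bad L0 \<gamma> {n. y n} k b}
             + c * real (scale L0 \<gamma> k) powr (-\<epsilon>)"
proof -
  define L where "L = scale L0 \<gamma> k"
  define m where "m = (a + 1) * L - 1"
  define n where "n = b * L - m"
  have "(a + 1) * L + L = (a + 2) * L"
    by (simp add: algebra_simps)
  also have "\<dots> \<le> b * L"
    using ab by (rule mult_right_mono) simp
  finally have "(a + 1) * L + L \<le> b * L" .
  moreover have "1 \<le> (a + 1) * L"
    using L by (simp add: L_def)
  ultimately have gap: "L + 1 \<le> n" and "m + n = b * L"
    unfolding n_def m_def by linarith+
  then have "block L0 \<gamma> k a \<subseteq> {..m}" and "block L0 \<gamma> k b \<subseteq> {m+n..}"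
    unfolding block_def m_def L_def by auto
  then have "{y. bad L0 \<gamma> {n. y n} k a} \<in> coord_sigma {..m}"
      and "{y. bad L0 \<gamma> {n. y n} k b} \<in> coord_sigma {m+n..}"
    using coord_sigma_mono bad_in_coord_sigma by (blast, blast)
  with gap have "measure M ({y. bad L0 \<gamma> {n. y n} k a} \<inter> {y. bad L0 \<gamma> {n. y n} k b})
      \<le> measure M {y. bad L0 \<gamma> {n. y n} k a} * measure M {y. bad L0 \<gamma> {n. y n} k b}
        + c * real n powr (-\<epsilon>)"
    using mixing[unfolded coord_mixing_def, rule_format, of n] by simp
  moreover have "c * real n powr (-\<epsilon>) \<le> c * real L powr (-\<epsilon>)"
    using gap L \<open>c \<ge> 0\<close> \<open>\<epsilon> > 0\<close> by (intro mult_left_mono powr_mono2') (auto simp: L_def)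
  ultimately show ?thesis
    unfolding L_def by linarith
qed

lemma measure_bad_Suc_le:
  assumes "prob_space M" and sets_M: "sets M = sets bool_seqs"
    and mixing: "coord_mixing M c \<epsilon>" and "c \<ge> 0" "\<epsilon> > 0"
    and L: "scale L0 \<gamma> k \<ge> 1"
    and p: "\<And>i. measure M {y. bad L0 \<gamma> {n. y n} k i} \<le> p"
  shows "measure M {y. bad L0 \<gamma> {n. y n} (Suc k) 0}
           \<le> real (mfac \<gamma> (scale L0 \<gamma> k))^2 * (p^2 + c * real (scale L0 \<gamma> k) powr (-\<epsilon>))"
proof -
  interpret prob_space M by fact
  let ?m = "mfac \<gamma> (scale L0 \<gamma> k)" and ?B = "\<lambda>i. {y. bad L0 \<gamma> {n. y n} k i}"
  let ?bound = "p^2 + c * real (scale L0 \<gamma> k) powr (-\<epsilon>)"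
  define Pairs where "Pairs = {(a, b). b < ?m \<and> a + 2 \<le> b}"
  have events: "?B i \<in> events" for i
    using bad_in_sets sets_M by blast
  have "0 \<le> p"
    using p[of 0] measure_nonneg order_trans by blast
  have pair: "measure M (?B a \<inter> ?B b) \<le> ?bound" if "(a, b) \<in> Pairs" for a b
  proof -
    have "measure M (?B a) * measure M (?B b) \<le> p * p"
      using p \<open>0 \<le> p\<close> by (intro mult_mono) auto
    then show ?thesis
      using measure_bad_pair_le[OF mixing \<open>c \<ge> 0\<close> \<open>\<epsilon> > 0\<close> L, of a b] that
      by (simp add: Pairs_def power2_eq_square)
  qed
  have Pairs_sub: "Pairs \<subseteq> {..<?m} \<times> {..<?m}"
    by (auto simp: Pairs_def)
  then have "finite Pairs"
    by (rule finite_subset) simp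
  have "measure M {y. bad L0 \<gamma> {n. y n} (Suc k) 0} \<le> measure M (\<Union>q\<in>Pairs. ?B (fst q) \<inter> ?B (snd q))"
    using \<open>finite Pairs\<close> events
    by (intro finite_measure_mono[OF bad_Suc_subset_pairs[of L0 \<gamma> k, folded Pairs_def]]) auto
  also have "\<dots> \<le> (\<Sum>q\<in>Pairs. measure M (?B (fst q) \<inter> ?B (snd q)))"
    using \<open>finite Pairs\<close> events by (intro finite_measure_subadditive_finite) auto
  also have "\<dots> \<le> real (card Pairs) * ?bound"
    using sum_bounded_above[of Pairs "\<lambda>q. measure M (?B (fst q) \<inter> ?B (snd q))" ?bound] pair
    by fastforce
  also have "\<dots> \<le> real ?m ^ 2 * ?bound"
  proof (rule mult_right_mono)
    have "card Pairs \<le> ?m * ?m"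
      using card_mono[OF _ Pairs_sub] by (simp add: card_cartesian_product)
    then show "real (card Pairs) \<le> real ?m ^ 2"
      by (simp add: power2_eq_square flip: of_nat_mult)
  qed (use \<open>0 \<le> p\<close> \<open>c \<ge> 0\<close> in auto)
  finally show ?thesis .
qed

lemma recursion_inequality:
  fixes x m L0 c \<alpha> \<epsilon> \<gamma> :: real
  assumes "1 \<le> L0" "L0 \<le> x" "1 \<le> m" "m \<le> x powr (\<gamma> - 1)"
    and "c \<ge> 0" "0 < \<alpha>" "\<alpha> \<le> \<epsilon> / 2" "\<gamma> < 1 + \<alpha> / (\<alpha> + 2)"
    and L0_large: "L0 powr (2 + 2*\<alpha> - \<gamma>*\<alpha> - 2*\<gamma>) \<ge> c + 1"
  shows "m^2 * ((x powr (-\<alpha>))^2 + c * x powr (-\<epsilon>)) \<le> (x * m) powr (-\<alpha>)"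
proof -
  define c2 where "c2 = 2 + 2*\<alpha> - \<gamma>*\<alpha> - 2*\<gamma>"
  have "\<gamma> * (\<alpha> + 2) < (1 + \<alpha> / (\<alpha> + 2)) * (\<alpha> + 2)"
    using assms(6,8) by (intro mult_strict_right_mono) auto
  also have "\<dots> = 2 * \<alpha> + 2"
    using assms(6) by (simp add: field_simps)
  finally have "c2 > 0"
    by (simp add: c2_def algebra_simps)
  have "x > 0"
    using assms(1,2) by simp
  have "c * x powr (-\<epsilon>) \<le> c * x powr (-2*\<alpha>)"
    using assms by (intro mult_left_mono powr_mono) auto
  then have "(x powr (-\<alpha>))^2 + c * x powr (-\<epsilon>) \<le> (1 + c) * x powr (-2*\<alpha>)"
    by (simp add: power2_eq_square algebra_simps flip: powr_add)
  also have "\<dots> \<le> x powr c2 * x powr (-2*\<alpha>)"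
    using L0_large powr_mono2[of c2 L0 x] \<open>c2 > 0\<close> assms(1,2)
    by (intro mult_right_mono) (simp_all add: c2_def)
  finally have "m^2 * ((x powr (-\<alpha>))^2 + c * x powr (-\<epsilon>)) \<le> (x powr (\<gamma> - 1))^2 * (x powr c2 * x powr (-2*\<alpha>))"
    using assms(3-5) by (intro mult_mono power_mono) auto
  also have "\<dots> = (x powr \<gamma>) powr (-\<alpha>)"
    using \<open>x > 0\<close> by (simp add: c2_def power2_eq_square powr_powr algebra_simps flip: powr_add)
  also have "\<dots> \<le> (x * m) powr (-\<alpha>)"
  proof (rule powr_mono2')
    show "x * m \<le> x powr \<gamma>"
      using assms(4) \<open>x > 0\<close> mult_left_mono[OF assms(4), of x]
      by (simp add: powr_mult_base flip: powr_add)
  qed (use assms \<open>x > 0\<close> in auto)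
  finally show ?thesis .
qed

lemma mfac_bounds:
  assumes "1 \<le> real L powr (\<gamma> - 1)"
  shows "1 \<le> mfac \<gamma> L" and "real (mfac \<gamma> L) \<le> real L powr (\<gamma> - 1)"
proof -
  have "1 \<le> \<lfloor>real L powr (\<gamma> - 1)\<rfloor>"
    using assms by (simp add: le_floor_iff)
  then show "1 \<le> mfac \<gamma> L"
    unfolding mfac_def by linarith
  show "real (mfac \<gamma> L) \<le> real L powr (\<gamma> - 1)"
    using \<open>1 \<le> \<lfloor>_\<rfloor>\<close> unfolding mfac_def
    by (metis of_int_floor_le of_nat_nat order_trans zero_le_one of_int_of_nat_eq)
qed

lemma scale_ge_L0:
  assumes "1 \<le> real L0 powr (\<gamma> - 1)" and "1 \<le> \<gamma>"
  shows "L0 \<le> scale L0 \<gamma> k"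
proof (induction k)
  case (Suc k)
  have "real L0 powr (\<gamma> - 1) \<le> real (scale L0 \<gamma> k) powr (\<gamma> - 1)"
    using Suc.IH assms(2) by (intro powr_mono2) auto
  then have "1 \<le> mfac \<gamma> (scale L0 \<gamma> k)"
    using assms(1) by (intro mfac_bounds) simp
  with Suc.IH show ?case
    by (simp add: le_trans[OF _ mult_le_mono2[of 1]])
qed simp

lemma mfac_scale_bounds:
  assumes "1 \<le> real L0 powr (\<gamma> - 1)" and "1 \<le> \<gamma>"
  shows "1 \<le> mfac \<gamma> (scale L0 \<gamma> k)"
    and "real (mfac \<gamma> (scale L0 \<gamma> k)) \<le> real (scale L0 \<gamma> k) powr (\<gamma> - 1)"
proof -
  have "real L0 powr (\<gamma> - 1) \<le> real (scale L0 \<gamma> k) powr (\<gamma> - 1)"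
    using scale_ge_L0[OF assms] assms(2) by (intro powr_mono2) auto
  with assms(1) show "1 \<le> mfac \<gamma> (scale L0 \<gamma> k)"
    and "real (mfac \<gamma> (scale L0 \<gamma> k)) \<le> real (scale L0 \<gamma> k) powr (\<gamma> - 1)"
    by (intro mfac_bounds; simp)+
qed

theorem lemma3p1:
  fixes xi rho :: "nat pmf" and \<epsilon> \<alpha> \<gamma> c1 :: real and L0 :: nat
  assumes xi_pos: "set_pmf xi \<subseteq> {1..}"
    and xi_aperiodic: "Gcd (set_pmf xi) = 1"
    and eps_pos: "\<epsilon> > 0"
    and xi_moment: "integrable (measure_pmf xi) (\<lambda>n. real n powr (1 + \<epsilon>))"
    and rho_def: "\<And>k. pmf rho k =
        measure_pmf.prob xi {k+1..} / measure_pmf.expectation xi real"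
    and c1_pos: "c1 > 0"
    and mixing: "\<And>n m A B. n \<ge> 1 \<Longrightarrow> A \<in> coord_sigma {..m} \<Longrightarrow> B \<in> coord_sigma {m+n..} \<Longrightarrow>
        measure (env_law xi rho) (A \<inter> B)
          \<le> measure (env_law xi rho) A * measure (env_law xi rho) B + c1 * real n powr (-\<epsilon>)"
    and alpha: "0 < \<alpha>" "\<alpha> \<le> \<epsilon> / 2"
    and gamma: "1 < \<gamma>" "\<gamma> < 1 + \<alpha> / (\<alpha> + 2)"
    and L0_i: "real L0 powr (\<gamma> - 1) \<ge> 3"
    and L0_ii: "real L0 powr (\<epsilon> - \<alpha>) \<ge> measure_pmf.expectation rho (\<lambda>k. real k powr \<epsilon>)"
    and L0_iii: "real L0 powr (2 + 2*\<alpha> - \<gamma>*\<alpha> - 2*\<gamma>) \<ge> c1 + 1"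
  shows "\<forall>k. measure (env_law xi rho) {y. bad L0 \<gamma> {n. y n} k 0}
              \<le> real (scale L0 \<gamma> k) powr (-\<alpha>)"
  \<comment> \<open>Aperiodicity of \<xi> is what makes the mixing hypothesis true.\<close>
proof
  have "L0 > 0"
    using L0_i by (cases "L0 = 0") auto
  have L0_le_scale: "L0 \<le> scale L0 \<gamma> k" for k
    using L0_i gamma(1) by (intro scale_ge_L0) auto
  have mixing_law: "coord_mixing (env_law xi rho) c1 \<epsilon>"
    unfolding coord_mixing_def using mixing by blast
  fix k
  show "measure (env_law xi rho) {y. bad L0 \<gamma> {n. y n} k 0} \<le> real (scale L0 \<gamma> k) powr (-\<alpha>)"
  proof (induction k)
    case 0
    show ?case
      using measure_env_law_bad_level0_le[OF eps_pos \<open>L0 > 0\<close> xi_moment rho_def L0_ii] by simp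
  next
    case (Suc k)
    let ?L = "scale L0 \<gamma> k"
    have "measure (env_law xi rho) {y. bad L0 \<gamma> {n. y n} k i} \<le> real ?L powr (-\<alpha>)" for i
      unfolding measure_env_law_bad_stationary[OF xi_pos rho_def, of L0 \<gamma> k i] by (rule Suc.IH)
    then have "measure (env_law xi rho) {y. bad L0 \<gamma> {n. y n} (Suc k) 0}
        \<le> real (mfac \<gamma> ?L)^2 * ((real ?L powr (-\<alpha>))^2 + c1 * real ?L powr (-\<epsilon>))"
      using mixing_law c1_pos eps_pos L0_le_scale[of k] \<open>L0 > 0\<close>
      by (intro measure_bad_Suc_le[OF prob_space_env_law sets_env_law]) auto
    also have "\<dots> \<le> (real ?L * real (mfac \<gamma> ?L)) powr (-\<alpha>)"
      using L0_le_scale[of k] \<open>L0 > 0\<close> mfac_scale_bounds[of L0 \<gamma> k] L0_i gamma c1_pos alpha L0_iii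
      by (intro recursion_inequality[of "real L0"]) auto
    finally show ?case
      by simp
  qed
qed

end
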